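(* Let $\gamma\in\mathbb{R}$, $\psi:\mathbb{N}\to[0,\tfrac12]$, and let $\mathcal{I}_q\subseteq\mathbb{Z}_q$ ($q\in\mathbb{N}$) be such that $\tfrac1q\mathcal{I}_q$ is uniformly distributed modulo 1, i.e. for all $0\le x\le y\le1$, $$\lim_{q\to\infty}\frac{\#\{a\in\mathcal{I}_q: a/q\in[x,y)\}}{|\mathcal{I}_q|}=y-x.$$ Suppose there exist constants $C'>0$, $c>0$ and finite sets $\mathcal{S}_k\subset\mathbb{Z}$ with $\min\mathcal{S}_k\to+\infty$ such that for all sufficiently large $k$, $$\sum_{q\in\mathcal{S}_k}\frac{|\mathcal{I}_q|\psi(q)}{q}\ge c\qquad\text{and}\qquad\sum_{\substack{r<q\\ q,r\in\mathcal{S}_k}}\mu(E_q^{\mathcal{I}}\cap E_r^{\mathcal{I}})\le C'\Big(\sum_{q\in\mathcal{S}_k}\frac{|\mathcal{I}_q|\psi(q)}{q}\Big)^2.$$ Then $\mu(\limsup_{q\to\infty}E_q^{\mathcal{I}})=1$.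
   Context: $\mu$ is Lebesgue measure, $\mathbb{Z}_q=\{0,\dots,q-1\}$, $\|y\|$ is the distance from $y$ to the nearest integer, and $$E_q^{\mathcal{I}}=E_q^{\mathcal{I}}(\gamma,\psi):=\Big\{x\in[0,1]:\Big\|x-\frac{a+\gamma}{q}\Big\|\le\frac{\psi(q)}{q}\text{ for some }a\in\mathcal{I}_q\Big\}.$$ *)

theory Defs
  imports "HOL-Analysis.Analysis" "HOL-Library.Liminf_Limsup"
begin

definition dist_nint :: "real \<Rightarrow> real" where
  "dist_nint y = \<bar>y - of_int (round y)\<bar>"

definition E_set :: "(nat \<Rightarrow> nat set) \<Rightarrow> real \<Rightarrow> (nat \<Rightarrow> real) \<Rightarrow> nat \<Rightarrow> real set" where
  "E_set I \<gamma> \<psi> q = {x \<in> {0..1}. \<exists>a \<in> I q.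
      dist_nint (x - (real a + \<gamma>) / real q) \<le> \<psi> q / real q}"

end

theory Submission
  imports Defs
begin

(*
  Write w q = |I q| \<psi>(q) / q. Uniform distribution of I q / q makes E_q occupy at least about
  2 w q (v - u) of every interval (u, v), while \<mu>(E_q) = O(w q). Suppose a measurable
  B \<subseteq> [0, 1] of measure m > 0 were missed by every E_q with q \<ge> n. Approximate B from outside
  by a finite union U of intervals with \<mu>(U - B) \<le> \<epsilon>. For q \<in> S_k with k large, E_q meets U in
  measure about 2 w q \<mu>(U), all of it inside W = U - B. Cauchy-Schwarz gives
  (\<Sum>q \<mu>(E_q \<inter> W))\<^sup>2 \<le> \<mu>(W) \<Sum>q r \<mu>(E_q \<inter> E_r), and quasi-independence bounds the double
  sum by a constant times (\<Sum>q w q)\<^sup>2; together m\<^sup>2 \<le> const * \<epsilon> for all small \<epsilon>, so m = 0.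
  Hence every [0, 1] - (\<Union>q\<ge>n. E_q) is null and limsup E_q has full measure.
*)

lemma sum_square_eq_diag_plus_pairs:
  fixes f :: "'a::linorder \<Rightarrow> 'a \<Rightarrow> 'b::comm_semiring_1"
  assumes S: "finite S" and sym: "\<And>q r. f q r = f r q"
  shows "(\<Sum>q\<in>S. \<Sum>r\<in>S. f q r) = (\<Sum>q\<in>S. f q q) + 2 * (\<Sum>(q, r)\<in>{(q, r) \<in> S \<times> S. r < q}. f q r)"
proof -
  define P where "P = {(q, r) \<in> S \<times> S. r < q}"
  have fin: "finite P" "finite (prod.swap ` P)" "finite ((\<lambda>q. (q, q)) ` S)"
    using S by (auto simp: P_def intro: finite_subset[of _ "S \<times> S"])
  have split: "S \<times> S = (\<lambda>q. (q, q)) ` S \<union> (P \<union> prod.swap ` P)"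
    by (auto simp: P_def image_iff)
  have swap: "(\<Sum>(q, r)\<in>prod.swap ` P. f q r) = (\<Sum>(q, r)\<in>P. f q r)"
    by (subst sum.reindex) (auto simp: sym inj_on_def case_prod_beta)
  have "(\<Sum>q\<in>S. \<Sum>r\<in>S. f q r) = (\<Sum>(q, r)\<in>S \<times> S. f q r)"
    by (simp add: sum.cartesian_product)
  also have "\<dots> = (\<Sum>(q, r)\<in>(\<lambda>q. (q, q)) ` S. f q r) + ((\<Sum>(q, r)\<in>P. f q r) + (\<Sum>(q, r)\<in>prod.swap ` P. f q r))"
    unfolding split using fin by (subst sum.union_disjoint sum.union_disjoint; auto simp: P_def)+
  also have "\<dots> = (\<Sum>q\<in>S. f q q) + 2 * (\<Sum>(q, r)\<in>P. f q r)"
    unfolding swap by (simp add: sum.reindex inj_on_def mult_2)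
  finally show ?thesis by (simp add: P_def)
qed

lemma sum_measure_Int_squared_le:
  fixes E :: "'i \<Rightarrow> 'a set"
  assumes S: "finite S" and E: "\<And>q. E q \<in> fmeasurable M" and W: "W \<in> fmeasurable M"
  shows "(\<Sum>q\<in>S. measure M (E q \<inter> W))\<^sup>2 \<le> measure M W * (\<Sum>q\<in>S. \<Sum>r\<in>S. measure M (E q \<inter> E r))"
proof -
  define X where "X = (\<Sum>q\<in>S. measure M (E q \<inter> W))"
  define Q where "Q = (\<Sum>q\<in>S. \<Sum>r\<in>S. measure M (E q \<inter> E r))"
  define h where "h x = (\<Sum>q\<in>S. indicator (E q) x :: real)" for x
  have integral_indicator_fmeasurable:
    "integrable M (indicator A :: 'a \<Rightarrow> real) \<and> integral\<^sup>L M (indicator A :: 'a \<Rightarrow> real) = measure M A"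
    if "A \<in> fmeasurable M" for A
    using that by (auto simp: fmeasurable_def)
  have int_Int: "integrable M (indicator (A \<inter> B) :: 'a \<Rightarrow> real) \<and>
      integral\<^sup>L M (indicator (A \<inter> B) :: 'a \<Rightarrow> real) = measure M (A \<inter> B)"
    if "A \<in> fmeasurable M" "B \<in> fmeasurable M" for A B
    using that by (intro integral_indicator_fmeasurable fmeasurable.Int) auto
  have integrand_X: "(\<lambda>x. indicator W x * h x) = (\<lambda>x. \<Sum>q\<in>S. indicator (E q \<inter> W) x)"
    by (simp add: h_def sum_distrib_left indicator_inter_arith mult.commute)
  have integrand_Q: "(\<lambda>x. h x * h x) = (\<lambda>x. \<Sum>q\<in>S. \<Sum>r\<in>S. indicator (E q \<inter> E r) x)"
    by (simp add: h_def sum_product indicator_inter_arith)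
  have int_X: "integrable M (\<lambda>x. indicator W x * h x)" "integral\<^sup>L M (\<lambda>x. indicator W x * h x) = X"
    unfolding integrand_X X_def using E W int_Int by auto
  have int_Q: "integrable M (\<lambda>x. h x * h x)" "integral\<^sup>L M (\<lambda>x. h x * h x) = Q"
    unfolding integrand_Q Q_def using E int_Int by auto
  have int_W: "integrable M (indicator W :: 'a \<Rightarrow> real)" "integral\<^sup>L M (indicator W :: 'a \<Rightarrow> real) = measure M W"
    using integral_indicator_fmeasurable[OF W] by auto
  \<comment> \<open>integrate (s * indicator W - h)^2 \<ge> 0, then choose s = X / \<mu> W\<close>
  have quadratic: "2 * s * X \<le> s\<^sup>2 * measure M W + Q" for s :: real
  proof -
    have "2 * s * (indicator W x * h x) \<le> s\<^sup>2 * indicator W x + h x * h x" for x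
      using zero_le_power2[of "s - h x"]
      by (cases "x \<in> W") (auto simp: power2_eq_square algebra_simps)
    then have "integral\<^sup>L M (\<lambda>x. 2 * s * (indicator W x * h x)) \<le> integral\<^sup>L M (\<lambda>x. s\<^sup>2 * indicator W x + h x * h x)"
      using int_X int_Q int_W by (intro integral_mono) auto
    then show ?thesis using int_X int_Q int_W by simp
  qed
  show ?thesis
  proof (cases "measure M W = 0")
    case True
    have "measure M (E q \<inter> W) = 0" for q
      using measure_mono_fmeasurable[of "E q \<inter> W" W M] W E True by (simp add: measure_le_0_iff)
    then show ?thesis using True by (simp add: X_def)
  next
    case False
    then have W_pos: "measure M W > 0" using measure_nonneg[of M W] by linarith
    have "2 * (X / measure M W) * X \<le> (X / measure M W)\<^sup>2 * measure M W + Q" by (rule quadratic)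
    then show ?thesis using W_pos unfolding X_def[symmetric] Q_def[symmetric]
      by (simp add: field_simps power2_eq_square)
  qed
qed

lemma approx_by_finite_union_of_intervals:
  fixes B :: "real set"
  assumes B: "B \<in> sets lebesgue" "B \<subseteq> {0..1}" and \<epsilon>: "\<epsilon> > 0"
  obtains P :: "(real \<times> real) set"
  where "finite P" "\<And>a b. (a, b) \<in> P \<Longrightarrow> 0 \<le> a \<and> a \<le> b \<and> b \<le> 1"
    and "disjoint_family_on (\<lambda>(a, b). {a<..<b}) P"
    and "measure lebesgue B - \<epsilon> \<le> measure lebesgue (\<Union>(a, b)\<in>P. {a..b})"
    and "measure lebesgue ((\<Union>(a, b)\<in>P. {a..b}) - B) \<le> \<epsilon>"
proof -
  have B_lmeasurable: "B \<in> lmeasurable"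
    by (rule fmeasurableI2[of "{0..1}"]) (use B in auto)
  obtain \<D> where "countable \<D>"
    and \<D>_intervals: "\<And>K. K \<in> \<D> \<Longrightarrow> K \<subseteq> cbox 0 1 \<and> K \<noteq> {} \<and> (\<exists>c d. K = cbox c d)"
    and \<D>_disjoint: "pairwise (\<lambda>A B. interior A \<inter> interior B = {}) \<D>"
    and B_\<D>: "B \<subseteq> \<Union>\<D>" and \<D>_lmeasurable: "\<Union>\<D> \<in> lmeasurable"
    and \<D>_measure: "measure lebesgue (\<Union>\<D>) \<le> measure lebesgue B + \<epsilon>"
    by (rule measurable_outer_intervals_bounded[OF B_lmeasurable _ \<epsilon>, of 0 1]) (use B in \<open>simp_all add: that\<close>)
  have \<D>_Icc: "K = {Inf K..Sup K} \<and> 0 \<le> Inf K \<and> Inf K \<le> Sup K \<and> Sup K \<le> 1" if "K \<in> \<D>" for K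
    using \<D>_intervals[OF that] by auto
  show ?thesis
  proof (cases "\<D> = {}")
    case True
    then show ?thesis using B_\<D> \<epsilon> by (intro that[of "{}"]) (auto simp: disjoint_family_on_def)
  next
    case False
    define f where "f = from_nat_into \<D>"
    define a where "a j = Inf (f j)" for j
    define b where "b j = Sup (f j)" for j
    define U where "U i = (\<Union>j<i. f j)" for i
    have range_f: "range f = \<D>"
      unfolding f_def using False \<open>countable \<D>\<close> by simp
    have f_Icc: "f j = {a j..b j}" "0 \<le> a j" "a j \<le> b j" "b j \<le> 1" for j
    proof -
      have "f j \<in> \<D>" using range_f by blast
      from \<D>_Icc[OF this] show "f j = {a j..b j}" "0 \<le> a j" "a j \<le> b j" "b j \<le> 1"
        unfolding a_def b_def by blast+
    qed
    have U_sets: "range U \<subseteq> sets lebesgue"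
      by (auto simp: U_def f_Icc(1))
    have U_Union: "(\<Union>i. U i) = \<Union>\<D>"
      using range_f by (auto simp: U_def)
    have "incseq U"
      unfolding incseq_def U_def by (intro allI impI UN_mono) auto
    moreover have "emeasure lebesgue (\<Union>i. U i) \<noteq> \<infinity>"
      unfolding U_Union using fmeasurableD2[OF \<D>_lmeasurable] by simp
    ultimately have "(\<lambda>i. measure lebesgue (U i)) \<longlonglongrightarrow> measure lebesgue (\<Union>i. U i)"
      by (rule Lim_measure_incseq[OF U_sets])
    then have "(\<lambda>i. measure lebesgue (U i)) \<longlonglongrightarrow> measure lebesgue (\<Union>\<D>)"
      by (simp only: U_Union)
    then have "\<forall>\<^sub>F i in sequentially. measure lebesgue (\<Union>\<D>) - \<epsilon> < measure lebesgue (U i)"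
      using \<epsilon> by (intro order_tendstoD(1)) auto
    then obtain i where i: "measure lebesgue (\<Union>\<D>) - \<epsilon> < measure lebesgue (U i)"
      using eventually_sequentially by auto
    define P where "P = (\<lambda>j. (a j, b j)) ` {..<i}"
    have U_eq: "(\<Union>(a, b)\<in>P. {a..b}) = U i"
      by (simp add: P_def U_def f_Icc(1))
    show ?thesis
    proof (rule that)
      show "finite P" by (simp add: P_def)
      show "0 \<le> x \<and> x \<le> y \<and> y \<le> 1" if "(x, y) \<in> P" for x y
        using that f_Icc by (auto simp: P_def)
      show "disjoint_family_on (\<lambda>(a, b). {a<..<b}) P"
        unfolding disjoint_family_on_def
      proof (intro ballI impI)
        fix p p' assume "p \<in> P" "p' \<in> P" "p \<noteq> p'"
        then obtain j k where jk: "p = (a j, b j)" "p' = (a k, b k)"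
          by (auto simp: P_def)
        with \<open>p \<noteq> p'\<close> have "f j \<noteq> f k"
          by (auto simp: a_def b_def)
        then have "interior (f j) \<inter> interior (f k) = {}"
          using \<D>_disjoint range_f unfolding pairwise_def by blast
        then show "(\<lambda>(a, b). {a<..<b}) p \<inter> (\<lambda>(a, b). {a<..<b}) p' = {}"
          by (simp only: jk f_Icc(1) interior_atLeastAtMost_real prod.case)
      qed
      have "measure lebesgue B \<le> measure lebesgue (\<Union>\<D>)"
        using B_\<D> B \<D>_lmeasurable by (intro measure_mono_fmeasurable) auto
      then show "measure lebesgue B - \<epsilon> \<le> measure lebesgue (\<Union>(a, b)\<in>P. {a..b})"
        unfolding U_eq using i by linarith
      have "U i \<subseteq> \<Union>\<D>"
        using range_f by (auto simp: U_def)
      then have "measure lebesgue (U i - B) \<le> measure lebesgue (\<Union>\<D> - B)"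
        using U_sets B fmeasurable_Diff[OF \<D>_lmeasurable B(1)] by (intro measure_mono_fmeasurable) auto
      also have "\<dots> = measure lebesgue (\<Union>\<D>) - measure lebesgue B"
        using B B_\<D> \<D>_lmeasurable by (intro measure_Diff) (auto simp: fmeasurable_def)
      finally show "measure lebesgue ((\<Union>(a, b)\<in>P. {a..b}) - B) \<le> \<epsilon>"
        unfolding U_eq using \<D>_measure by linarith
    qed
  qed
qed

section \<open>Divergence Borel--Cantelli under local density and quasi-independence\<close>

locale quasi_independent_family =
  fixes E :: "nat \<Rightarrow> real set" and w :: "nat \<Rightarrow> real" and S :: "nat \<Rightarrow> nat set"
    and \<kappa> C' c :: real
  assumes E_fmeasurable: "\<And>q. E q \<in> fmeasurable lebesgue"
    and E_subset: "\<And>q. E q \<subseteq> {0..1}"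
    and w_nonneg: "\<And>q. 0 \<le> w q"
    and measure_E_le: "\<And>q. measure lebesgue (E q) \<le> \<kappa> * w q"
    and \<kappa>_nonneg: "0 \<le> \<kappa>"
    and density: "\<And>u v \<delta>. 0 \<le> u \<Longrightarrow> u \<le> v \<Longrightarrow> v \<le> 1 \<Longrightarrow> \<delta> > 0 \<Longrightarrow>
       \<forall>\<^sub>F q in sequentially. 2 * w q * (v - u - \<delta>) \<le> measure lebesgue (E q \<inter> {u<..<v})"
    and C'_pos: "C' > 0" and c_pos: "c > 0"
    and S_finite: "\<And>k. finite (S k)"
    and S_min: "\<And>M. \<forall>\<^sub>F k in sequentially. \<forall>q \<in> S k. M \<le> q"
    and S_quasi_independent: "\<forall>\<^sub>F k in sequentially.
       (\<Sum>q\<in>S k. w q) \<ge> c \<and>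
       (\<Sum>(q, r)\<in>{(q, r) \<in> S k \<times> S k. r < q}. measure lebesgue (E q \<inter> E r))
         \<le> C' * (\<Sum>q\<in>S k. w q)\<^sup>2"
begin

lemma eventually_measure_Int_union_intervals_ge:
  fixes P :: "(real \<times> real) set"
  assumes P: "finite P" "\<And>a b. (a, b) \<in> P \<Longrightarrow> 0 \<le> a \<and> a \<le> b \<and> b \<le> 1"
      "disjoint_family_on (\<lambda>(a, b). {a<..<b}) P"
    and \<epsilon>: "\<epsilon> > 0"
  shows "\<forall>\<^sub>F q in sequentially. 2 * w q * (measure lebesgue (\<Union>(a, b)\<in>P. {a..b}) - \<epsilon>)
           \<le> measure lebesgue (E q \<inter> (\<Union>(a, b)\<in>P. {a..b}))"
proof -
  define U where "U = (\<Union>(a, b)\<in>P. {a..b})"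
  define \<delta> where "\<delta> = \<epsilon> / (real (card P) + 1)"
  have \<delta>: "\<delta> > 0" "real (card P) * \<delta> \<le> \<epsilon>"
    using \<epsilon> by (auto simp: \<delta>_def field_simps)
  have "measure lebesgue U \<le> (\<Sum>p\<in>P. measure lebesgue ((\<lambda>(a, b). {a..b}) p))"
    unfolding U_def using P(1) by (intro measure_UNION_le) auto
  also have "\<dots> = (\<Sum>(a, b)\<in>P. b - a)"
    using P(2) by (intro sum.cong) auto
  finally have length: "measure lebesgue U \<le> (\<Sum>(a, b)\<in>P. b - a)" .
  have "\<forall>\<^sub>F q in sequentially. \<forall>(a, b)\<in>P. 2 * w q * (b - a - \<delta>) \<le> measure lebesgue (E q \<inter> {a<..<b})"
    using P(1) by (rule eventually_ball_finite) (use P(2) density \<delta> in auto)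
  then show ?thesis
    unfolding U_def[symmetric]
  proof eventually_elim
    case (elim q)
    have disj: "disjoint_family_on (\<lambda>(a, b). E q \<inter> {a<..<b}) P"
      using P(3) unfolding disjoint_family_on_def by blast
    have "2 * w q * (measure lebesgue U - \<epsilon>) \<le> 2 * w q * ((\<Sum>(a, b)\<in>P. b - a) - real (card P) * \<delta>)"
      using length \<delta> w_nonneg[of q] by (intro mult_left_mono) auto
    also have "\<dots> = 2 * w q * (\<Sum>(a, b)\<in>P. b - a - \<delta>)"
      by (simp add: case_prod_beta sum_subtractf)
    also have "\<dots> = (\<Sum>(a, b)\<in>P. 2 * w q * (b - a - \<delta>))"
      by (simp add: case_prod_beta sum_distrib_left)
    also have "\<dots> \<le> (\<Sum>(a, b)\<in>P. measure lebesgue (E q \<inter> {a<..<b}))"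
      using elim by (intro sum_mono) auto
    also have "\<dots> = measure lebesgue (\<Union>(a, b)\<in>P. E q \<inter> {a<..<b})"
      using P(1) disj E_fmeasurable[of q]
      by (subst measure_finite_Union) (auto simp: case_prod_beta fmeasurable_Int_fmeasurable fmeasurableD2)
    also have "\<dots> \<le> measure lebesgue (E q \<inter> U)"
      using P(1) E_fmeasurable[of q]
      by (intro measure_mono_fmeasurable) (auto simp: U_def case_prod_beta intro!: fmeasurableD)
    finally show ?case .
  qed
qed

lemma double_sum_measure_Int_le:
  assumes L: "c \<le> (\<Sum>q\<in>S k. w q)"
    and pairs: "(\<Sum>(q, r)\<in>{(q, r) \<in> S k \<times> S k. r < q}. measure lebesgue (E q \<inter> E r))
      \<le> C' * (\<Sum>q\<in>S k. w q)\<^sup>2"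
  shows "(\<Sum>q\<in>S k. \<Sum>r\<in>S k. measure lebesgue (E q \<inter> E r)) \<le> (\<kappa> / c + 2 * C') * (\<Sum>q\<in>S k. w q)\<^sup>2"
proof -
  define L where "L = (\<Sum>q\<in>S k. w q)"
  have "\<kappa> * L = \<kappa> / c * (c * L)" using c_pos by simp
  also have "\<dots> \<le> \<kappa> / c * L\<^sup>2"
    using L c_pos \<kappa>_nonneg unfolding L_def[symmetric] power2_eq_square
    by (intro mult_left_mono mult_right_mono) auto
  finally have diagonal: "\<kappa> * L \<le> \<kappa> / c * L\<^sup>2" .
  have "(\<Sum>q\<in>S k. \<Sum>r\<in>S k. measure lebesgue (E q \<inter> E r)) = (\<Sum>q\<in>S k. measure lebesgue (E q)) +
      2 * (\<Sum>(q, r)\<in>{(q, r) \<in> S k \<times> S k. r < q}. measure lebesgue (E q \<inter> E r))"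
    by (subst sum_square_eq_diag_plus_pairs[OF S_finite]) (auto simp: Int_commute)
  also have "\<dots> \<le> \<kappa> * L + 2 * (C' * L\<^sup>2)"
    using pairs measure_E_le unfolding L_def
    by (intro add_mono mult_left_mono) (auto simp: sum_distrib_left intro: sum_mono)
  finally show ?thesis
    using diagonal unfolding L_def by (simp add: ring_distribs)
qed

lemma measure_squared_le_if_eventually_disjoint:
  assumes B: "B \<in> sets lebesgue" "B \<subseteq> {0..1}" and avoid: "\<And>q. n \<le> q \<Longrightarrow> E q \<inter> B = {}"
    and \<epsilon>: "0 < \<epsilon>" "\<epsilon> \<le> measure lebesgue B / 4"
  shows "(measure lebesgue B)\<^sup>2 \<le> (\<kappa> / c + 2 * C') * \<epsilon>"
proof -
  define m where "m = measure lebesgue B"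
  define K where "K = \<kappa> / c + 2 * C'"
  obtain P where P: "finite P" "\<And>a b. (a, b) \<in> P \<Longrightarrow> 0 \<le> a \<and> a \<le> b \<and> b \<le> 1"
      "disjoint_family_on (\<lambda>(a, b). {a<..<b}) P"
    and U_measure: "m - \<epsilon> \<le> measure lebesgue (\<Union>(a, b)\<in>P. {a..b})"
    and W_measure: "measure lebesgue ((\<Union>(a, b)\<in>P. {a..b}) - B) \<le> \<epsilon>"
    using approx_by_finite_union_of_intervals[OF B \<epsilon>(1)] unfolding m_def by blast
  define U where "U = (\<Union>(a, b)\<in>P. {a..b})"
  define W where "W = U - B"
  have W: "W \<in> fmeasurable lebesgue"
    using P(1) B by (auto simp: W_def U_def case_prod_beta intro!: fmeasurable_Diff)
  obtain N where N: "\<And>q. N \<le> q \<Longrightarrow> 2 * w q * (measure lebesgue U - \<epsilon>) \<le> measure lebesgue (E q \<inter> U)"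
    using eventually_measure_Int_union_intervals_ge[OF P \<epsilon>(1)]
    unfolding U_def eventually_sequentially by blast
  obtain k where k: "\<forall>q \<in> S k. max N n \<le> q" "c \<le> (\<Sum>q\<in>S k. w q)"
    "(\<Sum>(q, r)\<in>{(q, r) \<in> S k \<times> S k. r < q}. measure lebesgue (E q \<inter> E r)) \<le> C' * (\<Sum>q\<in>S k. w q)\<^sup>2"
    using eventually_conj[OF S_min[of "max N n"] S_quasi_independent] eventually_sequentially by auto
  define L where "L = (\<Sum>q\<in>S k. w q)"
  define X where "X = (\<Sum>q\<in>S k. measure lebesgue (E q \<inter> W))"
  have L: "L > 0" using k(2) c_pos by (simp add: L_def)
  have "L * m \<le> 2 * L * (measure lebesgue U - \<epsilon>)"
    using L U_measure \<epsilon>(2) by (simp add: U_def m_def)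
  also have "\<dots> = (\<Sum>q\<in>S k. 2 * w q * (measure lebesgue U - \<epsilon>))"
    by (simp add: L_def sum_distrib_left sum_distrib_right)
  also have "\<dots> \<le> (\<Sum>q\<in>S k. measure lebesgue (E q \<inter> U))"
    using k(1) N by (intro sum_mono) auto
  also have "\<dots> = X"
    unfolding X_def W_def
  proof (intro sum.cong refl)
    fix q assume "q \<in> S k"
    then have "E q \<inter> (U - B) = E q \<inter> U" using k(1) avoid[of q] by auto
    then show "measure lebesgue (E q \<inter> U) = measure lebesgue (E q \<inter> (U - B))" by simp
  qed
  finally have "(L * m)\<^sup>2 \<le> X\<^sup>2"
    using L \<epsilon> by (intro power_mono) (auto simp: m_def)
  also have "\<dots> \<le> measure lebesgue W * (\<Sum>q\<in>S k. \<Sum>r\<in>S k. measure lebesgue (E q \<inter> E r))"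
    unfolding X_def using S_finite E_fmeasurable W by (rule sum_measure_Int_squared_le)
  also have "\<dots> \<le> \<epsilon> * (K * L\<^sup>2)"
    using W_measure double_sum_measure_Int_le[OF k(2,3)] \<epsilon>(1)
    by (intro mult_mono) (auto simp: W_def U_def K_def L_def sum_nonneg)
  finally have "L\<^sup>2 * m\<^sup>2 \<le> L\<^sup>2 * (K * \<epsilon>)"
    by (simp add: algebra_simps)
  then show ?thesis
    using L by (simp add: m_def K_def)
qed

lemma measure_eq_0_if_eventually_disjoint:
  assumes B: "B \<in> sets lebesgue" "B \<subseteq> {0..1}" and avoid: "\<And>q. n \<le> q \<Longrightarrow> E q \<inter> B = {}"
  shows "measure lebesgue B = 0"
proof (rule ccontr)
  define m where "m = measure lebesgue B"
  define K where "K = \<kappa> / c + 2 * C'"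
  assume "measure lebesgue B \<noteq> 0"
  then have m: "m > 0" using measure_nonneg[of lebesgue B] unfolding m_def by linarith
  have K: "K > 0" using \<kappa>_nonneg c_pos C'_pos by (simp add: K_def add_nonneg_pos)
  define \<epsilon> where "\<epsilon> = min (m / 4) (m\<^sup>2 / (2 * K))"
  have "m\<^sup>2 \<le> K * \<epsilon>"
    unfolding m_def K_def
    by (rule measure_squared_le_if_eventually_disjoint[OF B avoid])
       (use m K in \<open>auto simp: \<epsilon>_def m_def\<close>)
  also have "\<dots> \<le> K * (m\<^sup>2 / (2 * K))"
    using K by (intro mult_left_mono) (auto simp: \<epsilon>_def)
  also have "\<dots> = m\<^sup>2 / 2"
    using K by simp
  finally show False using m by simp
qed

theorem measure_limsup_eq_1: "measure lebesgue (limsup E) = 1"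
proof -
  define B where "B n = {0..1} - (\<Union>q\<in>{n..}. E q)" for n
  have "B n \<in> null_sets lebesgue" for n
  proof -
    have B: "B n \<in> sets lebesgue" "B n \<subseteq> {0..1}"
      using E_fmeasurable by (auto simp: B_def)
    have "measure lebesgue (B n) = 0"
      using B by (rule measure_eq_0_if_eventually_disjoint) (auto simp: B_def)
    moreover have "B n \<in> fmeasurable lebesgue"
      by (rule fmeasurableI2[of "{0..1}"]) (use B in auto)
    ultimately show ?thesis
      by (auto simp: emeasure_eq_measure2)
  qed
  then have "(\<Union>n. B n) \<in> null_sets lebesgue" by blast
  moreover have "limsup E = {0..1} - (\<Union>n. B n)"
    using E_subset unfolding limsup_INF_SUP B_def by fastforce
  ultimately show ?thesis
    by (simp add: measure_Diff_null_set)
qed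

end

section \<open>Size and local density of the sets E_set\<close>

lemma dist_nint_le_abs: "dist_nint y \<le> \<bar>y\<bar>"
  unfolding dist_nint_def using round_diff_minimal[of y 0] by simp

lemma borel_measurable_dist_nint_diff: "(\<lambda>x. dist_nint (x - c)) \<in> borel_measurable borel"
  unfolding dist_nint_def round_def by measurable

lemma sets_near_mod_1: "{x \<in> {0..1}. dist_nint (x - c) \<le> r} \<in> sets borel"
  using borel_measurable_dist_nint_diff[of c] by measurable

lemma E_set_subset: "E_set I \<gamma> \<psi> q \<subseteq> {0..1}"
  by (auto simp: E_set_def)

lemma E_set_eq_UN:
  "E_set I \<gamma> \<psi> q = (\<Union>a\<in>I q. {x \<in> {0..1}. dist_nint (x - (real a + \<gamma>) / real q) \<le> \<psi> q / real q})"
  by (auto simp: E_set_def)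

lemma E_set_fmeasurable:
  assumes "finite (I q)"
  shows "E_set I \<gamma> \<psi> q \<in> fmeasurable lebesgue"
proof (rule fmeasurableI2[OF _ E_set_subset])
  show "E_set I \<gamma> \<psi> q \<in> sets lebesgue"
    unfolding E_set_eq_UN using assms sets_near_mod_1 by auto
qed simp

lemma measure_near_mod_1_le:
  assumes "0 \<le> r" "r \<le> 1/2"
  shows "measure lebesgue {x \<in> {0..1}. dist_nint (x - c) \<le> r} \<le> 6 * r"
proof -
  \<comment> \<open>the integer nearest to x - c lies in [- c - 1/2, 3/2 - c], so it is k, k + 1 or k + 2\<close>
  define k where "k = \<lceil>- c - 1/2\<rceil>"
  define J where "J j = {c + of_int k + real j - r .. c + of_int k + real j + r}" for j :: nat
  have "{x \<in> {0..1}. dist_nint (x - c) \<le> r} \<subseteq> (\<Union>j<3. J j)"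
  proof
    fix x assume x: "x \<in> {x \<in> {0..1}. dist_nint (x - c) \<le> r}"
    define m where "m = round (x - c)"
    have d: "\<bar>x - c - of_int m\<bar> \<le> r" using x by (simp add: dist_nint_def m_def)
    have "k \<le> m" "m \<le> k + 2"
      using d x assms ceiling_correct[of "- c - 1/2"] unfolding k_def by auto linarith+
    then have "x \<in> J (nat (m - k))" "nat (m - k) < 3"
      using d by (auto simp: J_def)
    then show "x \<in> (\<Union>j<3. J j)" by blast
  qed
  then have "measure lebesgue {x \<in> {0..1}. dist_nint (x - c) \<le> r} \<le> measure lebesgue (\<Union>j<3. J j)"
    by (intro measure_mono_fmeasurable) (use sets_near_mod_1 in \<open>auto simp: J_def\<close>)
  also have "\<dots> \<le> (\<Sum>j<3. measure lebesgue (J j))"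
    by (rule measure_UNION_le) (auto simp: J_def)
  also have "\<dots> = 6 * r"
    using assms by (simp add: J_def)
  finally show ?thesis .
qed

lemma measure_E_set_le:
  assumes "finite (I q)" "0 \<le> \<psi> q" "\<psi> q \<le> 1/2"
  shows "measure lebesgue (E_set I \<gamma> \<psi> q) \<le> 6 * (real (card (I q)) * \<psi> q / real q)"
proof -
  have r: "0 \<le> \<psi> q / real q" "\<psi> q / real q \<le> 1/2"
    using assms by (auto simp: divide_le_eq intro: order_trans)
  have "measure lebesgue (E_set I \<gamma> \<psi> q)
      \<le> (\<Sum>a\<in>I q. measure lebesgue {x \<in> {0..1}. dist_nint (x - (real a + \<gamma>) / real q) \<le> \<psi> q / real q})"
    unfolding E_set_eq_UN using assms(1) sets_near_mod_1 by (intro measure_UNION_le) auto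
  also have "\<dots> \<le> (\<Sum>a\<in>I q. 6 * (\<psi> q / real q))"
    using r by (intro sum_mono measure_near_mod_1_le)
  finally show ?thesis by (simp add: ac_simps)
qed

lemma measure_E_set_Int_ge_card:
  assumes q: "q > 0" and psi: "0 \<le> \<psi> q" "\<psi> q \<le> 1/2" and fin: "finite (I q)"
    and A: "A \<subseteq> I q" and uv: "0 \<le> u" "v \<le> 1"
    and inside: "\<And>a. a \<in> A \<Longrightarrow>
      u < (real a + \<gamma>) / real q - \<psi> q / real q \<and> (real a + \<gamma>) / real q + \<psi> q / real q \<le> v"
  shows "2 * real (card A) * (\<psi> q / real q) \<le> measure lebesgue (E_set I \<gamma> \<psi> q \<inter> {u<..<v})"
proof -
  define r where "r = \<psi> q / real q"
  define c where "c a = (real a + \<gamma>) / real q" for a :: nat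
  define G where "G a = {c a - r..<c a + r}" for a
  have r: "0 \<le> r" "2 * r \<le> 1 / real q"
    using psi q by (auto simp: r_def field_simps)
  have finA: "finite A" using A fin by (rule finite_subset)
  have G_sub: "G a \<subseteq> E_set I \<gamma> \<psi> q \<inter> {u<..<v}" if "a \<in> A" for a
  proof
    fix x assume "x \<in> G a"
    then have "\<bar>x - c a\<bar> \<le> r" "u < x" "x < v"
      using inside[OF that] by (auto simp: G_def c_def r_def)
    moreover have "dist_nint (x - c a) \<le> r"
      using dist_nint_le_abs[of "x - c a"] calculation(1) by linarith
    ultimately show "x \<in> E_set I \<gamma> \<psi> q \<inter> {u<..<v}"
      using that A uv by (auto simp: E_set_def c_def r_def)
  qed
  have "G a \<inter> G b = {}" if "a < b" for a b
  proof -
    have "1 / real q \<le> c b - c a"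
      using that q by (simp add: c_def divide_right_mono diff_divide_distrib[symmetric])
    then show ?thesis using r by (auto simp: G_def)
  qed
  then have disj: "disjoint_family_on G A"
    unfolding disjoint_family_on_def by (metis Int_commute linorder_neqE_nat)
  have "2 * real (card A) * r = (\<Sum>a\<in>A. measure lebesgue (G a))"
    using r by (simp add: G_def)
  also have "\<dots> = measure lebesgue (\<Union>a\<in>A. G a)"
    by (rule measure_finite_Union[OF finA _ disj, symmetric]) (use r in \<open>auto simp: G_def\<close>)
  also have "\<dots> \<le> measure lebesgue (E_set I \<gamma> \<psi> q \<inter> {u<..<v})"
  proof (rule measure_mono_fmeasurable)
    show "E_set I \<gamma> \<psi> q \<inter> {u<..<v} \<in> fmeasurable lebesgue"
      using E_set_fmeasurable[of I q \<gamma> \<psi>, OF fin] by (rule fmeasurable.Int) simp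
  qed (use G_sub finA in \<open>auto simp: G_def\<close>)
  finally show ?thesis by (simp add: r_def)
qed

lemma eventually_measure_E_set_Int_ge:
  assumes psi: "\<And>q. 0 \<le> \<psi> q \<and> \<psi> q \<le> 1/2"
    and I_sub: "\<And>q. I q \<subseteq> {0..<q}"
    and unif: "\<And>x y. 0 \<le> x \<Longrightarrow> x \<le> y \<Longrightarrow> y \<le> 1 \<Longrightarrow>
       ((\<lambda>q. real (card {a \<in> I q. real a / real q \<in> {x..<y}}) / real (card (I q)))
          \<longlongrightarrow> y - x) sequentially"
    and uv: "0 \<le> u" "u \<le> v" "v \<le> 1" and \<delta>: "\<delta> > 0"
  shows "\<forall>\<^sub>F q in sequentially. 2 * (real (card (I q)) * \<psi> q / real q) * (v - u - \<delta>)
           \<le> measure lebesgue (E_set I \<gamma> \<psi> q \<inter> {u<..<v})"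
proof (cases "v - u \<le> \<delta>")
  case True
  have "2 * (real (card (I q)) * \<psi> q / real q) * (v - u - \<delta>) \<le> 0" for q
    using True psi[of q] by (intro mult_nonneg_nonpos) auto
  then show ?thesis by (intro always_eventually allI order_trans[OF _ measure_nonneg])
next
  case False
  \<comment> \<open>shrinking (u, v) by \<eta> absorbs the shift \<gamma>/q and the radius \<psi> q/q once q is large\<close>
  define \<eta> where "\<eta> = \<delta> / 4"
  define x where "x = u + \<eta>"
  define y where "y = v - \<eta>"
  have \<eta>: "\<eta> > 0" using \<delta> by (simp add: \<eta>_def)
  have xy: "0 \<le> x" "x \<le> y" "y \<le> 1" using False uv \<eta> by (auto simp: x_def y_def \<eta>_def)
  have "\<forall>\<^sub>F q in sequentially. y - x - \<eta> < real (card {a \<in> I q. real a / real q \<in> {x..<y}}) / real (card (I q))"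
    using \<eta> by (intro order_tendstoD(1)[OF unif[OF xy]]) auto
  moreover obtain N :: nat where N: "(\<bar>\<gamma>\<bar> + 1) / \<eta> < real N"
    using reals_Archimedean2 by blast
  then have "\<forall>\<^sub>F q in sequentially. (\<bar>\<gamma>\<bar> + 1) / \<eta> < real q"
    by (intro eventually_sequentiallyI[of N]) (auto intro: less_le_trans)
  ultimately show ?thesis
  proof eventually_elim
    case (elim q)
    define A where "A = {a \<in> I q. real a / real q \<in> {x..<y}}"
    have q: "real q > 0" using elim(2) \<eta> by (smt (verit) divide_pos_pos)
    have small: "(\<bar>\<gamma>\<bar> + 1) / real q < \<eta>" using elim(2) q \<eta> by (simp add: field_simps)
    have r: "0 \<le> \<psi> q / real q" "\<psi> q / real q \<le> 1 / real q"
      using psi[of q] q by (auto simp: divide_right_mono)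
    have inside: "u < (real a + \<gamma>) / real q - \<psi> q / real q \<and> (real a + \<gamma>) / real q + \<psi> q / real q \<le> v"
      if "a \<in> A" for a
    proof -
      have "\<bar>(real a + \<gamma>) / real q - real a / real q\<bar> + 1 / real q < \<eta>"
        using small q by (simp add: add_divide_distrib)
      then show ?thesis using that r by (auto simp: A_def x_def y_def abs_less_iff)
    qed
    have card_A: "real (card (I q)) * (v - u - \<delta>) \<le> real (card A)"
    proof (cases "card (I q) = 0")
      case False
      have "v - u - \<delta> < real (card A) / real (card (I q))"
        using elim(1) \<delta> unfolding A_def x_def y_def \<eta>_def by linarith
      then show ?thesis using False by (simp add: field_simps)
    qed simp
    have "2 * (real (card (I q)) * \<psi> q / real q) * (v - u - \<delta>)
        = 2 * (real (card (I q)) * (v - u - \<delta>)) * (\<psi> q / real q)" by simp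
    also have "\<dots> \<le> 2 * real (card A) * (\<psi> q / real q)"
      using card_A r by (intro mult_right_mono) auto
    also have "\<dots> \<le> measure lebesgue (E_set I \<gamma> \<psi> q \<inter> {u<..<v})"
      using q psi[of q] I_sub[of q] uv inside
      by (intro measure_E_set_Int_ge_card[where A = A]) (auto simp: A_def intro: finite_subset)
    finally show ?case .
  qed
qed

theorem mainTheorem9:
  fixes \<gamma> :: real and \<psi> :: "nat \<Rightarrow> real" and I :: "nat \<Rightarrow> nat set"
    and S :: "nat \<Rightarrow> nat set" and C' c :: real
  assumes psi_range: "\<And>q. 0 \<le> \<psi> q \<and> \<psi> q \<le> 1/2"
    and I_sub: "\<And>q. I q \<subseteq> {0..<q}"
    and unif: "\<And>x y. 0 \<le> x \<Longrightarrow> x \<le> y \<Longrightarrow> y \<le> 1 \<Longrightarrow>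
       ((\<lambda>q. real (card {a \<in> I q. real a / real q \<in> {x..<y}}) / real (card (I q)))
          \<longlongrightarrow> y - x) sequentially"
    and C'_pos: "C' > 0" and c_pos: "c > 0"
    and S_fin: "\<And>k. finite (S k)"
    and S_min: "\<And>M. \<forall>\<^sub>F k in sequentially. \<forall>q \<in> S k. M \<le> q"
    and ev: "\<forall>\<^sub>F k in sequentially.
       (\<Sum>q\<in>S k. real (card (I q)) * \<psi> q / real q) \<ge> c \<and>
       (\<Sum>(q, r)\<in>{(q, r) \<in> S k \<times> S k. r < q}.
          measure lebesgue (E_set I \<gamma> \<psi> q \<inter> E_set I \<gamma> \<psi> r))
         \<le> C' * (\<Sum>q\<in>S k. real (card (I q)) * \<psi> q / real q)^2"
  shows "measure lebesgue (limsup (\<lambda>q. E_set I \<gamma> \<psi> q)) = 1"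
proof -
  have finite_I: "finite (I q)" for q
    using I_sub[of q] by (rule finite_subset) simp
  interpret quasi_independent_family "E_set I \<gamma> \<psi>" "\<lambda>q. real (card (I q)) * \<psi> q / real q" S 6 C' c
  proof
    show "E_set I \<gamma> \<psi> q \<in> fmeasurable lebesgue" for q
      using finite_I by (rule E_set_fmeasurable)
    show "measure lebesgue (E_set I \<gamma> \<psi> q) \<le> 6 * (real (card (I q)) * \<psi> q / real q)" for q
      using finite_I psi_range by (intro measure_E_set_le) auto
    show "\<forall>\<^sub>F q in sequentially. 2 * (real (card (I q)) * \<psi> q / real q) * (v - u - \<delta>)
        \<le> measure lebesgue (E_set I \<gamma> \<psi> q \<inter> {u<..<v})"
      if "0 \<le> u" "u \<le> v" "v \<le> 1" "\<delta> > 0" for u v \<delta>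
      using psi_range I_sub unif that by (rule eventually_measure_E_set_Int_ge)
  qed (use psi_range E_set_subset C'_pos c_pos S_fin S_min ev in auto)
  show ?thesis by (rule measure_limsup_eq_1)
qed

end
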